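(* Let $n\ge 5$ and let $f$ be an RDF of $P(n,2)$ of weight $\gamma_R(P(n,2))$ with $|V_2|$ minimum among all such minimum-weight RDFs. For any index $i$, if $r_f(V'(i,7)) \le 0.5$, then $v_{i+2}\notin V_2$ and $v_{i+4}\notin V_2$.
   Context: For integers $n \ge 3$ and $1 \le k < n/2$, the generalized Petersen graph $P(n,k)$ has vertex set $\{v_i, u_i : 0 \le i \le n-1\}$ and edge set $\{v_iv_{i+1},\ v_iu_i,\ u_iu_{i+k} : 0 \le i \le n-1\}$, with subscripts taken modulo $n$. A Roman domination function (RDF) of a graph $G$ is a function $f: V(G)\to\{0,1,2\}$ such that every vertex $u$ with $f(u)=0$ is adjacent to at least one vertex $v$ with $f(v)=2$. Its weight is $\sum_{u\in V(G)} f(u)$; $\gamma_R(G)$ is the minimum weight of an RDF of $G$. For an RDF $f$ write $V_i=\{w: f(w)=i\}$, $i=0,1,2$. Define $g_f(w)=0.5$ if $w\in V_2$, $g_f(w)=1$ if $w\in V_1$, and $g_f(w)=0.5\,|N(w)\cap V_2|$ if $w\in V_0$, where $N(w)$ is the set of neighbors of $w$. Let $r_f(w)=g_f(w)-0.5$ and, for $S\subseteq V(P(n,2))$, $r_f(S)=\sum_{w\in S} r_f(w)$. For an integer $i$ and $t\ge 1$, $V'(i,t)=\{v_j,u_j : i\le j\le i+t-1\}$ (subscripts modulo $n$). *)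

theory Defs
  imports Complex_Main
begin

text \<open>Vertices of the generalized Petersen graph: outer vertices v_i and inner vertices u_i.\<close>
datatype pvert = V nat | U nat

definition gp_verts :: "nat \<Rightarrow> pvert set" where
  "gp_verts n = {V i | i. i < n} \<union> {U i | i. i < n}"

definition gp_edge0 :: "nat \<Rightarrow> nat \<Rightarrow> pvert \<Rightarrow> pvert \<Rightarrow> bool" where
  "gp_edge0 n k x y \<longleftrightarrow> (\<exists>i<n. (x = V i \<and> y = V ((i + 1) mod n))
                              \<or> (x = V i \<and> y = U i)
                              \<or> (x = U i \<and> y = U ((i + k) mod n)))"

definition gp_adj :: "nat \<Rightarrow> nat \<Rightarrow> pvert \<Rightarrow> pvert \<Rightarrow> bool" where
  "gp_adj n k x y \<longleftrightarrow> gp_edge0 n k x y \<or> gp_edge0 n k y x"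

definition gp_nbhd :: "nat \<Rightarrow> nat \<Rightarrow> pvert \<Rightarrow> pvert set" where
  "gp_nbhd n k w = {x. gp_adj n k w x}"

text \<open>Roman domination function on P(n,k) (values outside the vertex set are irrelevant).\<close>
definition is_RDF :: "nat \<Rightarrow> nat \<Rightarrow> (pvert \<Rightarrow> nat) \<Rightarrow> bool" where
  "is_RDF n k f \<longleftrightarrow> (\<forall>w\<in>gp_verts n. f w \<in> {0,1,2}) \<and>
     (\<forall>w\<in>gp_verts n. f w = 0 \<longrightarrow> (\<exists>x. gp_adj n k w x \<and> f x = 2))"

definition rdf_weight :: "nat \<Rightarrow> (pvert \<Rightarrow> nat) \<Rightarrow> nat" where
  "rdf_weight n f = (\<Sum>w\<in>gp_verts n. f w)"

definition gammaR :: "nat \<Rightarrow> nat \<Rightarrow> nat" where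
  "gammaR n k = (LEAST m. \<exists>f. is_RDF n k f \<and> rdf_weight n f = m)"

definition Vset :: "nat \<Rightarrow> (pvert \<Rightarrow> nat) \<Rightarrow> nat \<Rightarrow> pvert set" where
  "Vset n f j = {w \<in> gp_verts n. f w = j}"

definition g_f :: "nat \<Rightarrow> nat \<Rightarrow> (pvert \<Rightarrow> nat) \<Rightarrow> pvert \<Rightarrow> real" where
  "g_f n k f w = (if f w = 2 then 0.5 else if f w = 1 then 1
                  else 0.5 * real (card (gp_nbhd n k w \<inter> Vset n f 2)))"

definition r_f :: "nat \<Rightarrow> nat \<Rightarrow> (pvert \<Rightarrow> nat) \<Rightarrow> pvert \<Rightarrow> real" where
  "r_f n k f w = g_f n k f w - 0.5"

definition r_f_set :: "nat \<Rightarrow> nat \<Rightarrow> (pvert \<Rightarrow> nat) \<Rightarrow> pvert set \<Rightarrow> real" where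
  "r_f_set n k f S = (\<Sum>w\<in>S. r_f n k f w)"

definition Vprime :: "nat \<Rightarrow> int \<Rightarrow> nat \<Rightarrow> pvert set" where
  "Vprime n i t = {V (nat (j mod int n)) | j. i \<le> j \<and> j \<le> i + int t - 1}
                \<union> {U (nat (j mod int n)) | j. i \<le> j \<and> j \<le> i + int t - 1}"

definition idx :: "nat \<Rightarrow> int \<Rightarrow> nat" where
  "idx n j = nat (j mod int n)"

end

theory Submission
  imports Defs
begin

text \<open>
  (2) Local layer: minimality of f forces every neighbour of a 2-vertex to carry label 0 (a 1-neighbour
  could be dropped to 0; a 2-neighbour lets us replace the 2 by 1's on the at most two remaining
  0-neighbours, which lowers the number of 2's).  Together with the RDF condition this is a purely
  local constraint on the labels of a vertex and its three neighbours.  Moreover 2 r_f(w) is an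
  integer determined by the same labels, and r_f \<ge> 0.

  (3) Combinatorial layer: reading the labels of the outer and inner rim from position i gives two
  integer sequences A, B satisfying the local constraints column by column, n-periodic, and whose
  doubled discharging weight over the first min(n,7) columns is at most 1.  A finite case analysis
  (done by an SMT solver on the unrolled ladder) shows A 2 \<noteq> 2 and A 4 \<noteq> 2, separately for
  n = 5, n = 6 and n \<ge> 7.
\<close>

subsection \<open>Cyclic indices\<close>

lemma int_idx: "0 < n \<Longrightarrow> int (idx n j) = j mod int n"
  unfolding idx_def by simp

lemma idx_lt: "0 < n \<Longrightarrow> idx n j < n"
  unfolding idx_def by (simp add: nat_less_iff)

lemma idx_eq_iff: "0 < n \<Longrightarrow> idx n a = idx n b \<longleftrightarrow> a mod int n = b mod int n"
  by (metis int_idx of_nat_eq_iff)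

lemma idx_of_nat: "m < n \<Longrightarrow> idx n (int m) = m"
  unfolding idx_def by (simp add: zmod_int[symmetric])

lemma idx_add_nat:
  assumes "0 < n" shows "(idx n j + c) mod n = idx n (j + int c)"
proof -
  have "int ((idx n j + c) mod n) = (j mod int n + int c) mod int n"
    using assms by (simp add: zmod_int int_idx)
  also have "\<dots> = int (idx n (j + int c))"
    using assms by (simp add: int_idx mod_add_left_eq)
  finally show ?thesis by simp
qed

lemma idx_shift:
  assumes "0 < n" and "idx n a = idx n b"
  shows "idx n (a + c) = idx n (b + c)"
proof -
  have "a mod int n = b mod int n" using assms idx_eq_iff by blast
  then have "(a + c) mod int n = (b + c) mod int n" by (rule mod_add_cong) (rule refl)
  then show ?thesis using assms(1) idx_eq_iff by blast
qed

lemma idx_eq_short: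
  assumes "0 < n" and "\<bar>a - b\<bar> < int n"
  shows "idx n a = idx n b \<longleftrightarrow> a = b"
proof
  assume "idx n a = idx n b"
  then have "int n dvd (a - b)" using assms(1) by (simp add: idx_eq_iff mod_eq_dvd_iff)
  then have dvd: "int n dvd \<bar>a - b\<bar>" by simp
  show "a = b"
  proof (rule ccontr)
    assume "a \<noteq> b"
    then have "0 < \<bar>a - b\<bar>" by simp
    with dvd have "int n \<le> \<bar>a - b\<bar>" by (rule zdvd_imp_le)
    with assms(2) show False by simp
  qed
qed simp

subsection \<open>Neighbourhoods in P(n,k)\<close>

lemma gp_edge0_idx:
  assumes n: "0 < n"
  shows "gp_edge0 n k x y \<longleftrightarrow>
    (\<exists>j. x = V (idx n j) \<and> (y = V (idx n (j + 1)) \<or> y = U (idx n j))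
       \<or> x = U (idx n j) \<and> y = U (idx n (j + int k)))"
proof
  assume "gp_edge0 n k x y"
  then obtain i where i: "i < n" and e: "x = V i \<and> y = V ((i + 1) mod n) \<or> x = V i \<and> y = U i
      \<or> x = U i \<and> y = U ((i + k) mod n)"
    unfolding gp_edge0_def by blast
  have "i = idx n (int i)" "(i + 1) mod n = idx n (int i + 1)" "(i + k) mod n = idx n (int i + int k)"
    using idx_of_nat[OF i] idx_add_nat[OF n, of "int i" 1] idx_add_nat[OF n, of "int i" k]
    by simp_all
  with e show "\<exists>j. x = V (idx n j) \<and> (y = V (idx n (j + 1)) \<or> y = U (idx n j))
       \<or> x = U (idx n j) \<and> y = U (idx n (j + int k))"
    by (intro exI[of _ "int i"]) auto
next
  assume "\<exists>j. x = V (idx n j) \<and> (y = V (idx n (j + 1)) \<or> y = U (idx n j))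
       \<or> x = U (idx n j) \<and> y = U (idx n (j + int k))"
  then obtain j where j: "x = V (idx n j) \<and> (y = V (idx n (j + 1)) \<or> y = U (idx n j))
       \<or> x = U (idx n j) \<and> y = U (idx n (j + int k))" by blast
  have "idx n (j + 1) = (idx n j + 1) mod n" "idx n (j + int k) = (idx n j + k) mod n"
    using idx_add_nat[OF n, of j 1] idx_add_nat[OF n, of j k] by simp_all
  with j show "gp_edge0 n k x y"
    unfolding gp_edge0_def by (intro exI[of _ "idx n j"]) (auto simp: idx_lt[OF n])
qed

lemma gp_nbhd_V:
  assumes n: "0 < n"
  shows "gp_nbhd n k (V (idx n j)) = {V (idx n (j - 1)), V (idx n (j + 1)), U (idx n j)}"
proof -
  have out: "gp_edge0 n k (V (idx n j)) y \<longleftrightarrow> y = V (idx n (j + 1)) \<or> y = U (idx n j)" for y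
  proof
    assume "gp_edge0 n k (V (idx n j)) y"
    then obtain j' where "idx n j = idx n j'" and "y = V (idx n (j' + 1)) \<or> y = U (idx n j')"
      unfolding gp_edge0_idx[OF n] by auto
    then show "y = V (idx n (j + 1)) \<or> y = U (idx n j)" using idx_shift[OF n, of j j' 1] by simp
  next
    assume "y = V (idx n (j + 1)) \<or> y = U (idx n j)"
    then show "gp_edge0 n k (V (idx n j)) y" unfolding gp_edge0_idx[OF n] by blast
  qed
  have inc: "gp_edge0 n k y (V (idx n j)) \<longleftrightarrow> y = V (idx n (j - 1))" for y
  proof
    assume "gp_edge0 n k y (V (idx n j))"
    then obtain j' where "y = V (idx n j')" and "idx n (j' + 1) = idx n j"
      unfolding gp_edge0_idx[OF n] by auto
    then show "y = V (idx n (j - 1))" using idx_shift[OF n, of "j' + 1" j "-1"] by simp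
  next
    assume "y = V (idx n (j - 1))"
    then show "gp_edge0 n k y (V (idx n j))"
      unfolding gp_edge0_idx[OF n] by (intro exI[of _ "j - 1"]) simp
  qed
  show ?thesis unfolding gp_nbhd_def gp_adj_def out inc by blast
qed

lemma gp_nbhd_U:
  assumes n: "0 < n"
  shows "gp_nbhd n k (U (idx n j)) = {V (idx n j), U (idx n (j - int k)), U (idx n (j + int k))}"
proof -
  have out: "gp_edge0 n k (U (idx n j)) y \<longleftrightarrow> y = U (idx n (j + int k))" for y
  proof
    assume "gp_edge0 n k (U (idx n j)) y"
    then obtain j' where "idx n j = idx n j'" and "y = U (idx n (j' + int k))"
      unfolding gp_edge0_idx[OF n] by auto
    then show "y = U (idx n (j + int k))" using idx_shift[OF n, of j j' "int k"] by simp
  next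
    assume "y = U (idx n (j + int k))"
    then show "gp_edge0 n k (U (idx n j)) y" unfolding gp_edge0_idx[OF n] by blast
  qed
  have inc: "gp_edge0 n k y (U (idx n j)) \<longleftrightarrow> y = V (idx n j) \<or> y = U (idx n (j - int k))" for y
  proof
    assume "gp_edge0 n k y (U (idx n j))"
    then obtain j' where "y = V (idx n j') \<and> idx n j' = idx n j
        \<or> y = U (idx n j') \<and> idx n (j' + int k) = idx n j"
      unfolding gp_edge0_idx[OF n] by auto
    then show "y = V (idx n j) \<or> y = U (idx n (j - int k))"
      using idx_shift[OF n, of "j' + int k" j "- int k"] by auto
  next
    assume "y = V (idx n j) \<or> y = U (idx n (j - int k))"
    then show "gp_edge0 n k y (U (idx n j))"
      unfolding gp_edge0_idx[OF n] by (metis diff_add_cancel)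
  qed
  show ?thesis unfolding gp_nbhd_def gp_adj_def out inc by blast
qed

lemma idx_in_verts: "0 < n \<Longrightarrow> V (idx n j) \<in> gp_verts n \<and> U (idx n j) \<in> gp_verts n"
  unfolding gp_verts_def using idx_lt by blast

lemma finite_gp_verts: "finite (gp_verts n)"
proof -
  have "gp_verts n = V ` {..<n} \<union> U ` {..<n}" unfolding gp_verts_def by auto
  then show ?thesis by simp
qed

lemma gp_adj_sym: "gp_adj n k x y \<longleftrightarrow> gp_adj n k y x"
  unfolding gp_adj_def by blast

lemma gp_nbhd_subset_verts: "gp_nbhd n k x \<subseteq> gp_verts n"
  unfolding gp_nbhd_def gp_adj_def gp_edge0_def gp_verts_def by auto

lemma gp_adj_verts: "gp_adj n k x y \<Longrightarrow> x \<in> gp_verts n \<and> y \<in> gp_verts n"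
  using gp_nbhd_subset_verts gp_adj_sym unfolding gp_nbhd_def by blast

definition nbhd_triple :: "nat \<Rightarrow> nat \<Rightarrow> pvert \<Rightarrow> pvert \<Rightarrow> pvert \<Rightarrow> pvert \<Rightarrow> bool" where
  "nbhd_triple n k w a b c \<longleftrightarrow> gp_nbhd n k w = {a, b, c} \<and> distinct [w, a, b, c]"

lemma nbhd_triple_V:
  assumes "5 \<le> n"
  shows "nbhd_triple n 2 (V (idx n j)) (V (idx n (j - 1))) (V (idx n (j + 1))) (U (idx n j))"
  using assms by (simp add: nbhd_triple_def gp_nbhd_V idx_eq_short)

lemma nbhd_triple_U:
  assumes "5 \<le> n"
  shows "nbhd_triple n 2 (U (idx n j)) (V (idx n j)) (U (idx n (j - 2))) (U (idx n (j + 2)))"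
  using assms gp_nbhd_U[of n 2 j] by (simp add: nbhd_triple_def idx_eq_short)

subsection \<open>Minimal Roman dominating functions\<close>

definition min_rdf :: "nat \<Rightarrow> nat \<Rightarrow> (pvert \<Rightarrow> nat) \<Rightarrow> bool" where
  "min_rdf n k f \<longleftrightarrow> is_RDF n k f \<and> rdf_weight n f = gammaR n k \<and>
     (\<forall>g. is_RDF n k g \<and> rdf_weight n g = gammaR n k \<longrightarrow> card (Vset n f 2) \<le> card (Vset n g 2))"

lemma gammaR_le: "is_RDF n k g \<Longrightarrow> gammaR n k \<le> rdf_weight n g"
  unfolding gammaR_def by (rule Least_le) blast

lemma min_rdf_improve:
  assumes "min_rdf n k f" and "is_RDF n k g" and "rdf_weight n g \<le> rdf_weight n f"
  shows "rdf_weight n g = rdf_weight n f \<and> card (Vset n f 2) \<le> card (Vset n g 2)"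
  using assms gammaR_le[OF assms(2)] unfolding min_rdf_def by auto

lemma is_RDF_range: "is_RDF n k f \<Longrightarrow> w \<in> gp_verts n \<Longrightarrow> f w \<le> 2"
  unfolding is_RDF_def by auto

text \<open>A neighbour of a 2-vertex never has label 1: relabelling it 0 gives a lighter RDF.\<close>

lemma min_rdf_no_1_next_to_2:
  assumes min: "min_rdf n k f" and x: "f x = 2" and xy: "gp_adj n k x y"
  shows "f y \<noteq> 1"
proof
  assume y1: "f y = 1"
  define g where "g = f(y := 0)"
  have rdf: "is_RDF n k f" using min unfolding min_rdf_def by blast
  have "is_RDF n k g"
    unfolding is_RDF_def
  proof (intro conjI ballI impI)
    fix w assume "w \<in> gp_verts n"
    then show "g w \<in> {0, 1, 2}" using rdf unfolding is_RDF_def g_def by auto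
  next
    fix w assume w: "w \<in> gp_verts n" "g w = 0"
    show "\<exists>z. gp_adj n k w z \<and> g z = 2"
    proof (cases "w = y")
      case True
      have "gp_adj n k y x" using xy gp_adj_sym by blast
      moreover have "g x = 2" using x y1 unfolding g_def by auto
      ultimately show ?thesis using True by blast
    next
      case False
      then obtain z where "gp_adj n k w z" "f z = 2" using rdf w unfolding is_RDF_def g_def by auto
      moreover have "z \<noteq> y" using \<open>f z = 2\<close> y1 by auto
      ultimately show ?thesis unfolding g_def by auto
    qed
  qed
  moreover have "rdf_weight n g + 1 = rdf_weight n f"
  proof -
    have y: "y \<in> gp_verts n" using gp_adj_verts[OF xy] by blast
    have "sum g (gp_verts n - {y}) = sum f (gp_verts n - {y})"
      unfolding g_def by (rule sum.cong) auto
    then show ?thesis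
      unfolding rdf_weight_def using sum.remove[OF finite_gp_verts y, of f]
        sum.remove[OF finite_gp_verts y, of g] y1 by (simp add: g_def)
  qed
  ultimately show False using min_rdf_improve[OF min] by force
qed

text \<open>Two adjacent 2-vertices are impossible when the degree is at most 3: turning one of them
  into 0 and its (at most two) other 0-neighbours into 1 keeps the weight and removes a 2.\<close>

lemma min_rdf_no_2_next_to_2:
  assumes min: "min_rdf n k f" and x: "f x = 2" and y: "y \<in> gp_nbhd n k x"
    and loopfree: "x \<notin> gp_nbhd n k x" and deg: "card (gp_nbhd n k x) \<le> 3"
  shows "f y \<noteq> 2"
proof
  assume y2: "f y = 2"
  have rdf: "is_RDF n k f" using min unfolding min_rdf_def by blast
  have xy: "gp_adj n k x y" and "x \<noteq> y" using y loopfree unfolding gp_nbhd_def by auto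
  have xV: "x \<in> gp_verts n" using gp_adj_verts[OF xy] by blast
  define D where "D = {w \<in> gp_nbhd n k x. f w = 0}"
  define g where "g = (\<lambda>w. if w = x then 0 else if w \<in> D then 1 else f w)"
  have "is_RDF n k g"
    unfolding is_RDF_def
  proof (intro conjI ballI impI)
    fix w assume "w \<in> gp_verts n"
    then show "g w \<in> {0, 1, 2}" using rdf unfolding is_RDF_def g_def by auto
  next
    fix w assume w: "w \<in> gp_verts n" "g w = 0"
    show "\<exists>z. gp_adj n k w z \<and> g z = 2"
    proof (cases "w = x")
      case True
      have "g y = 2" using y2 \<open>x \<noteq> y\<close> unfolding g_def D_def by simp
      then show ?thesis using xy True by blast
    next
      case False
      then have "f w = 0" and "w \<notin> D" using w unfolding g_def by (auto split: if_splits)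
      then obtain z where z: "gp_adj n k w z" "f z = 2" using rdf w unfolding is_RDF_def by blast
      have "z \<noteq> x" using z \<open>f w = 0\<close> \<open>w \<notin> D\<close> gp_adj_sym unfolding D_def gp_nbhd_def by blast
      then have "g z = 2" using z unfolding g_def D_def by simp
      then show ?thesis using z by blast
    qed
  qed
  moreover have "rdf_weight n g \<le> rdf_weight n f"
  proof -
    have fin: "finite (gp_nbhd n k x)"
      using finite_subset[OF gp_nbhd_subset_verts finite_gp_verts] .
    have DV: "D \<subseteq> gp_verts n" using gp_nbhd_subset_verts unfolding D_def by blast
    have "D \<subseteq> gp_nbhd n k x - {y}" unfolding D_def using y2 by auto
    then have "card D \<le> card (gp_nbhd n k x) - 1"
      using card_mono[of "gp_nbhd n k x - {y}" D] fin y by simp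
    then have cD: "card D \<le> 2" using deg by linarith
    have "\<And>w. g w + (if w = x then 2 else 0) = f w + (if w \<in> D then 1 else 0)"
      unfolding g_def D_def using x by auto
    then have "rdf_weight n g + (\<Sum>w\<in>gp_verts n. if w = x then 2 else 0)
        = rdf_weight n f + (\<Sum>w\<in>gp_verts n. if w \<in> D then 1 else 0)"
      unfolding rdf_weight_def sum.distrib[symmetric] by simp
    moreover have "(\<Sum>w\<in>gp_verts n. if w = x then 2 else 0) = (2::nat)"
      using xV finite_gp_verts by simp
    moreover have "(\<Sum>w\<in>gp_verts n. if w \<in> D then 1 else 0) = card D"
      using DV finite_gp_verts by (simp add: sum.If_cases Int_absorb1)
    ultimately show ?thesis using cD by linarith
  qed
  ultimately have "card (Vset n f 2) \<le> card (Vset n g 2)" using min_rdf_improve[OF min] by blast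
  moreover have "Vset n g 2 = Vset n f 2 - {x}" unfolding Vset_def g_def D_def by auto
  moreover have "x \<in> Vset n f 2" "finite (Vset n f 2)"
    unfolding Vset_def using xV x finite_gp_verts by auto
  ultimately show False by (metis card_Diff1_less not_le)
qed

subsection \<open>Local constraints and the discharging weight\<close>

text \<open>Constraint on the label x of a vertex with neighbour labels a, b, c imposed by a minimal
  RDF: labels lie in {0,1,2}, a 0 sees a 2, and a 2 sees only 0's.\<close>

definition vertex_ok :: "int \<Rightarrow> int \<Rightarrow> int \<Rightarrow> int \<Rightarrow> bool" where
  "vertex_ok x a b c \<longleftrightarrow> 0 \<le> x \<and> x \<le> 2
     \<and> (x = 0 \<longrightarrow> a = 2 \<or> b = 2 \<or> c = 2)
     \<and> (x = 2 \<longrightarrow> a = 0 \<and> b = 0 \<and> c = 0)"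

text \<open>Twice the value r_f at a vertex of degree 3, as a function of the labels.\<close>

definition twice_r :: "int \<Rightarrow> int \<Rightarrow> int \<Rightarrow> int \<Rightarrow> int" where
  "twice_r x a b c = (if x = 2 then 0 else if x = 1 then 1
     else of_bool (a = 2) + of_bool (b = 2) + of_bool (c = 2) - 1)"

text \<open>r_f is nonnegative for every RDF: a 0-vertex sees at least one 2.\<close>

lemma r_f_nonneg:
  assumes rdf: "is_RDF n k f" and w: "w \<in> gp_verts n"
  shows "0 \<le> r_f n k f w"
proof (cases "f w = 0")
  case True
  then obtain z where z: "gp_adj n k w z" "f z = 2" using rdf w unfolding is_RDF_def by blast
  then have "z \<in> gp_nbhd n k w \<inter> Vset n f 2"
    using gp_adj_verts[OF z(1)] unfolding gp_nbhd_def Vset_def by auto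
  moreover have "finite (gp_nbhd n k w \<inter> Vset n f 2)"
    using finite_subset[OF gp_nbhd_subset_verts finite_gp_verts] by blast
  ultimately have "0 < card (gp_nbhd n k w \<inter> Vset n f 2)"
    unfolding card_gt_0_iff by blast
  then show ?thesis unfolding r_f_def g_f_def using True by simp
next
  case False
  then show ?thesis using rdf w unfolding r_f_def g_f_def is_RDF_def by auto
qed

lemma twice_r_f:
  assumes "nbhd_triple n k w a b c"
  shows "2 * r_f n k f w = of_int (twice_r (int (f w)) (int (f a)) (int (f b)) (int (f c)))"
proof -
  have N: "gp_nbhd n k w = {a, b, c}" and d: "distinct [w, a, b, c]"
    using assms unfolding nbhd_triple_def by blast+
  have "{a, b, c} \<subseteq> gp_verts n" using gp_nbhd_subset_verts N by blast
  then have mem: "z \<in> Vset n f 2 \<longleftrightarrow> f z = 2" if "z \<in> {a, b, c}" for z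
    using that unfolding Vset_def by blast
  have "card ({a, b, c} \<inter> Vset n f 2)
      = of_bool (a \<in> Vset n f 2) + of_bool (b \<in> Vset n f 2) + of_bool (c \<in> Vset n f 2)"
    using d by (auto simp: Int_insert_left card_insert_if)
  then have card: "real (card (gp_nbhd n k w \<inter> Vset n f 2))
      = of_bool (f a = 2) + of_bool (f b = 2) + of_bool (f c = 2)"
    unfolding N using mem by simp
  show ?thesis
    unfolding r_f_def g_f_def twice_r_def card by (simp add: of_bool_def)
qed

lemma min_rdf_vertex_ok:
  assumes min: "min_rdf n k f" and N: "nbhd_triple n k w a b c" and w: "w \<in> gp_verts n"
  shows "vertex_ok (int (f w)) (int (f a)) (int (f b)) (int (f c))"
proof -
  have rdf: "is_RDF n k f" using min unfolding min_rdf_def by blast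
  have nb: "gp_nbhd n k w = {a, b, c}" and "w \<notin> gp_nbhd n k w"
    using N unfolding nbhd_triple_def by auto
  have deg: "card (gp_nbhd n k w) \<le> 3" unfolding nb by (simp add: card_insert_if)
  have zero: "f a = 2 \<or> f b = 2 \<or> f c = 2" if "f w = 0"
  proof -
    obtain z where "gp_adj n k w z" "f z = 2" using rdf w \<open>f w = 0\<close> unfolding is_RDF_def by blast
    moreover from this(1) have "z \<in> {a, b, c}" using nb unfolding gp_nbhd_def by blast
    ultimately show ?thesis by blast
  qed
  have "f y = 0" if "f w = 2" "y \<in> {a, b, c}" for y
  proof -
    have "y \<in> gp_verts n" using that(2) nb gp_nbhd_subset_verts by blast
    then have "f y \<le> 2" using is_RDF_range[OF rdf] by blast
    moreover have "f y \<noteq> 1"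
      using min_rdf_no_1_next_to_2[OF min that(1)] that(2) nb unfolding gp_nbhd_def by blast
    moreover have "f y \<noteq> 2"
      using min_rdf_no_2_next_to_2[OF min that(1) _ \<open>w \<notin> gp_nbhd n k w\<close> deg] that(2) nb by blast
    ultimately show "f y = 0" by linarith
  qed
  then show ?thesis
    using zero is_RDF_range[OF rdf w] unfolding vertex_ok_def by auto
qed

subsection \<open>The two rims as integer sequences\<close>

definition outer_labels :: "nat \<Rightarrow> (pvert \<Rightarrow> nat) \<Rightarrow> int \<Rightarrow> int \<Rightarrow> int" where
  "outer_labels n f i k = int (f (V (idx n (i + k))))"

definition inner_labels :: "nat \<Rightarrow> (pvert \<Rightarrow> nat) \<Rightarrow> int \<Rightarrow> int \<Rightarrow> int" where
  "inner_labels n f i k = int (f (U (idx n (i + k))))"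

text \<open>Local constraints and doubled discharging weight of column k (the pair v_k, u_k) of a pair
  of label sequences A (outer rim) and B (inner rim) of the unrolled graph P(\<infinity>,2).\<close>

definition column_ok :: "(int \<Rightarrow> int) \<Rightarrow> (int \<Rightarrow> int) \<Rightarrow> int \<Rightarrow> bool" where
  "column_ok A B k \<longleftrightarrow> vertex_ok (A k) (A (k - 1)) (A (k + 1)) (B k)
                      \<and> vertex_ok (B k) (A k) (B (k - 2)) (B (k + 2))"

definition charge :: "(int \<Rightarrow> int) \<Rightarrow> (int \<Rightarrow> int) \<Rightarrow> int \<Rightarrow> int" where
  "charge A B k = twice_r (A k) (A (k - 1)) (A (k + 1)) (B k)
                + twice_r (B k) (A k) (B (k - 2)) (B (k + 2))"

lemma labels_periodic:
  "outer_labels n f i (k + int n) = outer_labels n f i k"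
  "inner_labels n f i (k + int n) = inner_labels n f i k"
  unfolding outer_labels_def inner_labels_def idx_def by (simp_all add: add.assoc[symmetric])

lemma labels_column_ok:
  assumes n: "5 \<le> n" and min: "min_rdf n 2 f"
  shows "column_ok (outer_labels n f i) (inner_labels n f i) k"
proof -
  have n0: "0 < n" using n by simp
  have "vertex_ok (int (f (V (idx n (i + k))))) (int (f (V (idx n (i + k - 1)))))
                  (int (f (V (idx n (i + k + 1))))) (int (f (U (idx n (i + k)))))"
    using min_rdf_vertex_ok[OF min nbhd_triple_V[OF n]] idx_in_verts[OF n0] by blast
  moreover have "vertex_ok (int (f (U (idx n (i + k))))) (int (f (V (idx n (i + k)))))
                  (int (f (U (idx n (i + k - 2))))) (int (f (U (idx n (i + k + 2)))))"
    using min_rdf_vertex_ok[OF min nbhd_triple_U[OF n]] idx_in_verts[OF n0] by blast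
  ultimately show ?thesis
    unfolding column_ok_def outer_labels_def inner_labels_def by (simp add: add_diff_eq add.assoc)
qed

lemma labels_charge:
  assumes n: "5 \<le> n"
  shows "2 * (r_f n 2 f (V (idx n (i + k))) + r_f n 2 f (U (idx n (i + k))))
       = of_int (charge (outer_labels n f i) (inner_labels n f i) k)"
  using twice_r_f[OF nbhd_triple_V[OF n], of f "i + k"] twice_r_f[OF nbhd_triple_U[OF n], of f "i + k"]
  unfolding charge_def outer_labels_def inner_labels_def
  by (simp add: add_diff_eq add.assoc distrib_left)

lemma Vprime_columns:
  "Vprime n i t = (\<lambda>k. V (idx n (i + int k))) ` {..<t} \<union> (\<lambda>k. U (idx n (i + int k))) ` {..<t}"
proof -
  have J: "{j. i \<le> j \<and> j \<le> i + int t - 1} = (\<lambda>k. i + int k) ` {..<t}"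
  proof (intro set_eqI iffI)
    fix j assume "j \<in> {j. i \<le> j \<and> j \<le> i + int t - 1}"
    then have "j = i + int (nat (j - i))" and "nat (j - i) < t" by auto
    then show "j \<in> (\<lambda>k. i + int k) ` {..<t}" by blast
  qed auto
  have "Vprime n i t = (\<lambda>j. V (idx n j)) ` {j. i \<le> j \<and> j \<le> i + int t - 1}
                     \<union> (\<lambda>j. U (idx n j)) ` {j. i \<le> j \<and> j \<le> i + int t - 1}"
    unfolding Vprime_def idx_def by blast
  then show ?thesis unfolding J image_image .
qed

lemma Vprime_subset_verts: "0 < n \<Longrightarrow> Vprime n i t \<subseteq> gp_verts n"
  unfolding Vprime_columns using idx_in_verts by blast

lemma Vprime_mono: "t \<le> s \<Longrightarrow> Vprime n i t \<subseteq> Vprime n i s"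
  unfolding Vprime_columns by auto

text \<open>For t \<le> n the 2t vertices of V'(i,t) are distinct, so sums split column by column.\<close>

lemma sum_Vprime:
  assumes n: "0 < n" and t: "t \<le> n"
  shows "sum h (Vprime n i t) = (\<Sum>k<t. h (V (idx n (i + int k))) + h (U (idx n (i + int k))))"
proof -
  have inj: "inj_on (\<lambda>k. idx n (i + int k)) {..<t}"
  proof (rule inj_onI)
    fix a b assume "a \<in> {..<t}" "b \<in> {..<t}" "idx n (i + int a) = idx n (i + int b)"
    then show "a = b" using idx_eq_short[OF n, of "i + int a" "i + int b"] t by auto
  qed
  then have injV: "inj_on (\<lambda>k. V (idx n (i + int k))) {..<t}"
        and injU: "inj_on (\<lambda>k. U (idx n (i + int k))) {..<t}"
    unfolding inj_on_def by auto
  have "sum h (Vprime n i t) = sum h ((\<lambda>k. V (idx n (i + int k))) ` {..<t})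
                             + sum h ((\<lambda>k. U (idx n (i + int k))) ` {..<t})"
    unfolding Vprime_columns by (rule sum.union_disjoint) auto
  also have "\<dots> = (\<Sum>k<t. h (V (idx n (i + int k)))) + (\<Sum>k<t. h (U (idx n (i + int k))))"
    using sum.reindex[OF injV, of h] sum.reindex[OF injU, of h] by simp
  finally show ?thesis by (simp add: sum.distrib)
qed

lemma window_charge_bound:
  assumes n: "5 \<le> n" and rdf: "is_RDF n 2 f" and t: "t \<le> n" "t \<le> 7"
    and win: "r_f_set n 2 f (Vprime n i 7) \<le> 0.5"
  shows "(\<Sum>k<t. charge (outer_labels n f i) (inner_labels n f i) (int k)) \<le> 1"
proof -
  have n0: "0 < n" using n by simp
  have fin: "finite (Vprime n i 7)"
    using finite_subset[OF Vprime_subset_verts[OF n0] finite_gp_verts] .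
  have "r_f_set n 2 f (Vprime n i t) \<le> r_f_set n 2 f (Vprime n i 7)"
    unfolding r_f_set_def
    using sum_mono2[OF fin Vprime_mono[OF t(2)]] r_f_nonneg[OF rdf] Vprime_subset_verts[OF n0]
    by blast
  moreover have "2 * r_f_set n 2 f (Vprime n i t)
      = of_int (\<Sum>k<t. charge (outer_labels n f i) (inner_labels n f i) (int k))"
    unfolding r_f_set_def sum_Vprime[OF n0 t(1)] sum_distrib_left labels_charge[OF n] of_int_sum ..
  ultimately show ?thesis using win by linarith
qed

subsection \<open>The finite case analysis on the ladder\<close>

text \<open>If every column satisfies the local constraints and the doubled weight of columns 0..6 is at
  most 1, then neither v_2 nor v_4 is labelled 2.  Only columns -2..8 matter, so this is a
  finite problem, settled by an SMT solver.\<close>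

lemma ladder_window_7:
  assumes ok: "\<And>k. column_ok A B k"
    and win: "(\<Sum>k<7. charge A B (int k)) \<le> 1"
  shows "A 2 \<noteq> 2 \<and> A 4 \<noteq> 2"
proof -
  have "column_ok A B (-2) \<and> column_ok A B (-1) \<and> column_ok A B 0 \<and> column_ok A B 1
      \<and> column_ok A B 2 \<and> column_ok A B 3 \<and> column_ok A B 4 \<and> column_ok A B 5
      \<and> column_ok A B 6 \<and> column_ok A B 7 \<and> column_ok A B 8"
    using ok by blast
  moreover have "charge A B 0 + charge A B 1 + charge A B 2 + charge A B 3
      + charge A B 4 + charge A B 5 + charge A B 6 \<le> 1"
    using win by (simp add: eval_nat_numeral)
  ultimately show ?thesis
    unfolding column_ok_def vertex_ok_def charge_def twice_r_def of_bool_def by (smt (z3))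
qed

text \<open>The same conclusion for the closed rims of P(5,2) and P(6,2), where the window wraps around;
  periodicity identifies the labels just outside the columns 0..p-1 with labels inside them.\<close>

lemma ladder_window_5:
  assumes ok: "\<And>k. column_ok A B k"
    and pA: "\<And>k. A (k + 5) = A k" and pB: "\<And>k. B (k + 5) = B k"
    and win: "(\<Sum>k<5. charge A B (int k)) \<le> 1"
  shows "A 2 \<noteq> 2 \<and> A 4 \<noteq> 2"
proof -
  have wrap: "A (-1) = A 4" "A 5 = A 0" "B (-2) = B 3" "B (-1) = B 4" "B 5 = B 0" "B 6 = B 1"
    using pA[of "-1"] pA[of 0] pB[of "-2"] pB[of "-1"] pB[of 0] pB[of 1] by simp_all
  have "column_ok A B 0 \<and> column_ok A B 1 \<and> column_ok A B 2 \<and> column_ok A B 3 \<and> column_ok A B 4"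
    using ok by blast
  moreover have "charge A B 0 + charge A B 1 + charge A B 2 + charge A B 3 + charge A B 4 \<le> 1"
    using win by (simp add: eval_nat_numeral)
  ultimately show ?thesis
    unfolding column_ok_def vertex_ok_def charge_def twice_r_def of_bool_def
    using wrap by (smt (z3))
qed

lemma ladder_window_6:
  assumes ok: "\<And>k. column_ok A B k"
    and pA: "\<And>k. A (k + 6) = A k" and pB: "\<And>k. B (k + 6) = B k"
    and win: "(\<Sum>k<6. charge A B (int k)) \<le> 1"
  shows "A 2 \<noteq> 2 \<and> A 4 \<noteq> 2"
proof -
  have wrap: "A (-1) = A 5" "A 6 = A 0" "B (-2) = B 4" "B (-1) = B 5" "B 6 = B 0" "B 7 = B 1"
    using pA[of "-1"] pA[of 0] pB[of "-2"] pB[of "-1"] pB[of 0] pB[of 1] by simp_all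
  have "column_ok A B 0 \<and> column_ok A B 1 \<and> column_ok A B 2 \<and> column_ok A B 3
      \<and> column_ok A B 4 \<and> column_ok A B 5"
    using ok by blast
  moreover have "charge A B 0 + charge A B 1 + charge A B 2 + charge A B 3
      + charge A B 4 + charge A B 5 \<le> 1"
    using win by (simp add: eval_nat_numeral)
  ultimately show ?thesis
    unfolding column_ok_def vertex_ok_def charge_def twice_r_def of_bool_def
    using wrap by (smt (z3))
qed

theorem lemma2p6:
  fixes n :: nat and f :: "pvert \<Rightarrow> nat" and i :: int
  assumes "n \<ge> 5"
    and "is_RDF n 2 f"
    and "rdf_weight n f = gammaR n 2"
    and "\<forall>g. is_RDF n 2 g \<and> rdf_weight n g = gammaR n 2 \<longrightarrow>
               card (Vset n f 2) \<le> card (Vset n g 2)"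
    and "r_f_set n 2 f (Vprime n i 7) \<le> 0.5"
  shows "V (idx n (i + 2)) \<notin> Vset n f 2 \<and> V (idx n (i + 4)) \<notin> Vset n f 2"
proof -
  note n = assms(1) and rdf = assms(2) and win = assms(5)
  have min: "min_rdf n 2 f" using assms(2-4) unfolding min_rdf_def by blast
  define A where "A = outer_labels n f i"
  define B where "B = inner_labels n f i"
  have ok: "\<And>k. column_ok A B k" unfolding A_def B_def using labels_column_ok[OF n min] .
  have bound: "\<And>t. t \<le> n \<Longrightarrow> t \<le> 7 \<Longrightarrow> (\<Sum>k<t. charge A B (int k)) \<le> 1"
    unfolding A_def B_def using window_charge_bound[OF n rdf _ _ win] by blast
  have periodic: "\<And>k. A (k + int n) = A k" "\<And>k. B (k + int n) = B k"
    unfolding A_def B_def by (rule labels_periodic)+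
  have "A 2 \<noteq> 2 \<and> A 4 \<noteq> 2"
  proof -
    consider "n = 5" | "n = 6" | "7 \<le> n" using n by linarith
    then show ?thesis
    proof cases
      case 1 then show ?thesis using ladder_window_5[OF ok] periodic bound[of 5] by simp
    next
      case 2 then show ?thesis using ladder_window_6[OF ok] periodic bound[of 6] by simp
    next
      case 3 then show ?thesis using ladder_window_7[OF ok] bound[of 7] by simp
    qed
  qed
  then show ?thesis using idx_in_verts[of n] n unfolding A_def outer_labels_def Vset_def by auto
qed

end
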